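(* Consider the two-source game ($m=2$) with $n_1\ge n_2\ge 0$, $n_1\ge 1$, and any $\phi>0$, $\mu>0$, $q\in[0,1]$. There exists a (pure) Nash equilibrium in which $u_1>0$ and $u_2=n_2$, where $u_i$ denotes the number of users of $N_i$ choosing the direct path.
   Context: Two-source network: sources $s_1,s_2$ and destination $d$; source $s_i$ has a set $N_i$ of $n_i$ users. Each user generates an independent Poisson flow of packets of rate $\phi>0$; each direct link $(s_i,d)$ has service rate $\mu>0$; the sidelink between $s_1$ and $s_2$ loses packets independently with probability $q$, and $\bar q=1-q$. Only pure strategies are considered: a user of $N_1$ chooses DP $(s_1,d)$ or IP $(s_1,s_2,d)$; a user of $N_2$ chooses DP $(s_2,d)$ or IP $(s_2,s_1,d)$. With $u_i$ users of $N_i$ on DP, $T_1=u_1\phi+(n_2-u_2)\bar q\phi$ and $T_2=u_2\phi+(n_1-u_1)\bar q\phi$. The loss rate of a user of $N_i$ is $\phi\frac{T_i}{T_i+\mu}$ on DP and $\phi\left(q+\bar q\frac{T_j}{T_j+\mu}\right)$ on IP to $s_j$, $j\neq i$. A Nash equilibrium is a pure profile in which no user can strictly decrease its loss rate by unilaterally switching its route. *)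

theory Defs
  imports Complex_Main
begin

text \<open>A pure profile is a pair
  of route choices (s1, s2), s_i k = True meaning user k of N_i takes the direct path (DP),
  False meaning the indirect path (IP) through the other source.\<close>

definition dp_count :: "nat \<Rightarrow> (nat \<Rightarrow> bool) \<Rightarrow> nat" where
  "dp_count n s = card {k. k < n \<and> s k}"

definition load :: "real \<Rightarrow> real \<Rightarrow> nat \<Rightarrow> nat \<Rightarrow> nat \<Rightarrow> real" where
  "load phi q ui nj uj = real ui * phi + (real nj - real uj) * (1 - q) * phi"

definition loss_dp :: "real \<Rightarrow> real \<Rightarrow> real \<Rightarrow> real" where
  "loss_dp phi mu Ti = phi * (Ti / (Ti + mu))"

definition loss_ip :: "real \<Rightarrow> real \<Rightarrow> real \<Rightarrow> real \<Rightarrow> real" where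
  "loss_ip phi mu q Tj = phi * (q + (1 - q) * (Tj / (Tj + mu)))"

definition loss1 :: "real \<Rightarrow> real \<Rightarrow> real \<Rightarrow> nat \<Rightarrow> nat \<Rightarrow> (nat \<Rightarrow> bool) \<Rightarrow> (nat \<Rightarrow> bool) \<Rightarrow> nat \<Rightarrow> real" where
  "loss1 phi mu q n1 n2 s1 s2 k =
     (let u1 = dp_count n1 s1; u2 = dp_count n2 s2;
          T1 = load phi q u1 n2 u2; T2 = load phi q u2 n1 u1
      in if s1 k then loss_dp phi mu T1 else loss_ip phi mu q T2)"

definition loss2 :: "real \<Rightarrow> real \<Rightarrow> real \<Rightarrow> nat \<Rightarrow> nat \<Rightarrow> (nat \<Rightarrow> bool) \<Rightarrow> (nat \<Rightarrow> bool) \<Rightarrow> nat \<Rightarrow> real" where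
  "loss2 phi mu q n1 n2 s1 s2 k =
     (let u1 = dp_count n1 s1; u2 = dp_count n2 s2;
          T1 = load phi q u1 n2 u2; T2 = load phi q u2 n1 u1
      in if s2 k then loss_dp phi mu T2 else loss_ip phi mu q T1)"

definition is_NE :: "real \<Rightarrow> real \<Rightarrow> real \<Rightarrow> nat \<Rightarrow> nat \<Rightarrow> (nat \<Rightarrow> bool) \<Rightarrow> (nat \<Rightarrow> bool) \<Rightarrow> bool" where
  "is_NE phi mu q n1 n2 s1 s2 \<longleftrightarrow>
     (\<forall>k<n1. \<forall>b. \<not> (loss1 phi mu q n1 n2 (s1(k := b)) s2 k < loss1 phi mu q n1 n2 s1 s2 k)) \<and>
     (\<forall>k<n2. \<forall>b. \<not> (loss2 phi mu q n1 n2 s1 (s2(k := b)) k < loss2 phi mu q n1 n2 s1 s2 k))"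

end

theory Submission
  imports Defs
begin

text \<open>Fill the direct path of s_1 one user at a time, with every user of N_2 on its direct path,
  and stop at the last u_1 for which a direct user of N_1 still does not want to leave. Both
  loss rates are of the form phi (1 - c / (T + mu)), so each deviation is unprofitable exactly
  when a linear inequality between loads holds. Maximality of u_1 keeps the indirect users of N_1
  in place, and since n_1 \<ge> n_2 the load at s_2 stays small enough that no user of N_2 wants to
  leave its direct path either.\<close>

lemma dp_count_le: "dp_count n s \<le> n"
proof -
  have "{k. k < n \<and> s k} \<subseteq> {..<n}" by auto
  then show ?thesis unfolding dp_count_def by (metis card_lessThan card_mono finite_lessThan)
qed

lemma dp_count_prefix:
  assumes "u \<le> n" shows "dp_count n (\<lambda>k. k < u) = u"
proof -
  have "{k. k < n \<and> k < u} = {..<u}" using assms by auto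
  then show ?thesis unfolding dp_count_def by simp
qed

lemma dp_count_all: "dp_count n (\<lambda>_. True) = n"
  unfolding dp_count_def by simp

lemma dp_count_update_True:
  assumes "k < n" "\<not> s k"
  shows "dp_count n (s(k := True)) = dp_count n s + 1"
proof -
  have "{j. j < n \<and> (s(k := True)) j} = insert k {j. j < n \<and> s j}" using assms by auto
  then show ?thesis unfolding dp_count_def using assms by simp
qed

lemma dp_count_update_False:
  assumes "k < n" "s k"
  shows "dp_count n s = dp_count n (s(k := False)) + 1"
  using dp_count_update_True[of k n "s(k := False)"] assms by (simp add: fun_upd_idem)

lemma load_nonneg: "phi \<ge> 0 \<Longrightarrow> q \<le> 1 \<Longrightarrow> uj \<le> nj \<Longrightarrow> 0 \<le> load phi q ui nj uj"
  unfolding load_def by simp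

lemma loss_dp_eq: "0 < T + mu \<Longrightarrow> loss_dp phi mu T = phi * (1 - mu / (T + mu))"
  unfolding loss_dp_def by (simp add: field_simps)

lemma loss_ip_eq: "0 < S + mu \<Longrightarrow> loss_ip phi mu q S = phi * (1 - (1 - q) * mu / (S + mu))"
  unfolding loss_ip_def by (simp add: field_simps)

lemma loss_dp_le_loss_ip_iff:
  assumes "phi > 0" "mu > 0" "0 < T + mu" "0 < S + mu"
  shows "loss_dp phi mu T \<le> loss_ip phi mu q S \<longleftrightarrow> (1 - q) * (T + mu) \<le> S + mu"
proof -
  have "loss_dp phi mu T \<le> loss_ip phi mu q S \<longleftrightarrow> (1 - q) * mu / (S + mu) \<le> mu / (T + mu)"
    using assms by (simp add: loss_dp_eq loss_ip_eq)
  also have "\<dots> \<longleftrightarrow> mu * ((1 - q) * (T + mu)) \<le> mu * (S + mu)"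
    using assms by (simp add: divide_simps algebra_simps)
  finally show ?thesis using assms by simp
qed

lemma loss_ip_le_loss_dp_iff:
  assumes "phi > 0" "mu > 0" "0 < T + mu" "0 < S + mu"
  shows "loss_ip phi mu q S \<le> loss_dp phi mu T \<longleftrightarrow> S + mu \<le> (1 - q) * (T + mu)"
proof -
  have "loss_ip phi mu q S \<le> loss_dp phi mu T \<longleftrightarrow> mu / (T + mu) \<le> (1 - q) * mu / (S + mu)"
    using assms by (simp add: loss_dp_eq loss_ip_eq)
  also have "\<dots> \<longleftrightarrow> mu * (S + mu) \<le> mu * ((1 - q) * (T + mu))"
    using assms by (simp add: divide_simps algebra_simps)
  finally show ?thesis using assms by simp
qed

lemma loss1_switch_to_ip:
  assumes "k < n1" "s1 k"
  shows "loss1 phi mu q n1 n2 (s1(k := False)) s2 k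
    = loss_ip phi mu q (load phi q (dp_count n2 s2) n1 (dp_count n1 s1 - 1))"
  unfolding loss1_def Let_def using dp_count_update_False[of k n1 s1] assms by simp

lemma loss1_switch_to_dp:
  assumes "k < n1" "\<not> s1 k"
  shows "loss1 phi mu q n1 n2 (s1(k := True)) s2 k
    = loss_dp phi mu (load phi q (dp_count n1 s1 + 1) n2 (dp_count n2 s2))"
  unfolding loss1_def Let_def using dp_count_update_True[of k n1 s1] assms by simp

lemma loss2_switch_to_ip:
  assumes "k < n2" "s2 k"
  shows "loss2 phi mu q n1 n2 s1 (s2(k := False)) k
    = loss_ip phi mu q (load phi q (dp_count n1 s1) n2 (dp_count n2 s2 - 1))"
  unfolding loss2_def Let_def using dp_count_update_False[of k n2 s2] assms by simp

lemma load_add_mu_pos: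
  "phi \<ge> 0 \<Longrightarrow> mu > 0 \<Longrightarrow> q \<le> 1 \<Longrightarrow> uj \<le> nj \<Longrightarrow> 0 < load phi q ui nj uj + mu"
  using load_nonneg[of phi q uj nj ui] by simp

lemma no_profitable_switch1:
  fixes phi mu q :: real and n1 n2 :: nat and s1 s2 :: "nat \<Rightarrow> bool"
  defines "u1 \<equiv> dp_count n1 s1" and "u2 \<equiv> dp_count n2 s2"
  assumes "phi > 0" "mu > 0" "q \<le> 1" and k: "k < n1"
    and dp1: "0 < u1 \<Longrightarrow> (1 - q) * (load phi q u1 n2 u2 + mu) \<le> load phi q u2 n1 (u1 - 1) + mu"
    and ip1: "u1 < n1 \<Longrightarrow> load phi q u2 n1 u1 + mu \<le> (1 - q) * (load phi q (u1 + 1) n2 u2 + mu)"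
  shows "\<not> loss1 phi mu q n1 n2 (s1(k := b)) s2 k < loss1 phi mu q n1 n2 s1 s2 k"
proof -
  have bounds: "u1 \<le> n1" "u2 \<le> n2" unfolding u1_def u2_def by (simp_all add: dp_count_le)
  consider "b = s1 k" | "s1 k" "b = False" | "\<not> s1 k" "b = True" by blast
  then show ?thesis
  proof cases
    case 2
    then have "0 < u1" using dp_count_update_False[of k n1 s1] k u1_def by simp
    then have "loss_dp phi mu (load phi q u1 n2 u2) \<le> loss_ip phi mu q (load phi q u2 n1 (u1 - 1))"
      using dp1 bounds assms(3-5) by (simp add: loss_dp_le_loss_ip_iff load_add_mu_pos)
    moreover have "loss1 phi mu q n1 n2 (s1(k := b)) s2 k = loss_ip phi mu q (load phi q u2 n1 (u1 - 1))"
      using 2 loss1_switch_to_ip[of k n1 s1 phi mu q n2 s2] k by (simp add: u1_def u2_def)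
    ultimately show ?thesis
      using 2 by (simp add: loss1_def u1_def u2_def)
  next
    case 3
    then have "u1 < n1"
      using dp_count_update_True[of k n1 s1] dp_count_le[of n1 "s1(k := True)"] k u1_def by simp
    then have "loss_ip phi mu q (load phi q u2 n1 u1) \<le> loss_dp phi mu (load phi q (u1 + 1) n2 u2)"
      using ip1 bounds assms(3-5) by (simp add: loss_ip_le_loss_dp_iff load_add_mu_pos)
    moreover have "loss1 phi mu q n1 n2 (s1(k := b)) s2 k = loss_dp phi mu (load phi q (u1 + 1) n2 u2)"
      using 3 loss1_switch_to_dp[of k n1 s1 phi mu q n2 s2] k by (simp add: u1_def u2_def)
    ultimately show ?thesis
      using 3 by (simp add: loss1_def u1_def u2_def)
  qed simp
qed

lemma no_profitable_switch2_all_dp: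
  fixes phi mu q :: real and n1 n2 :: nat and s1 :: "nat \<Rightarrow> bool"
  defines "u1 \<equiv> dp_count n1 s1"
  assumes "phi > 0" "mu > 0" "q \<le> 1" and k: "k < n2"
    and dp2: "(1 - q) * (load phi q n2 n1 u1 + mu) \<le> load phi q u1 n2 (n2 - 1) + mu"
  shows "\<not> loss2 phi mu q n1 n2 s1 ((\<lambda>_. True)(k := b)) k < loss2 phi mu q n1 n2 s1 (\<lambda>_. True) k"
proof (cases b)
  case False
  have "u1 \<le> n1" unfolding u1_def by (rule dp_count_le)
  then have "loss_dp phi mu (load phi q n2 n1 u1) \<le> loss_ip phi mu q (load phi q u1 n2 (n2 - 1))"
    using dp2 assms(2-4) by (simp add: loss_dp_le_loss_ip_iff load_add_mu_pos)
  moreover have "loss2 phi mu q n1 n2 s1 ((\<lambda>_. True)(k := b)) k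
      = loss_ip phi mu q (load phi q u1 n2 (n2 - 1))"
    using False loss2_switch_to_ip[of k n2 "\<lambda>_. True" phi mu q n1 s1] k
    by (simp add: dp_count_all u1_def)
  ultimately show ?thesis
    by (simp add: loss2_def dp_count_all u1_def)
qed (simp add: fun_upd_idem)

lemma dp2_condition_from_ip1_condition:
  fixes phi mu q :: real
  assumes "phi \<ge> 0" "mu \<ge> 0" "0 \<le> q" "q \<le> 1" "n2 \<le> n1" "u \<le> n1" "0 < n2"
    and ip1: "u < n1 \<Longrightarrow> load phi q n2 n1 u + mu \<le> (1 - q) * (load phi q (u + 1) n2 n2 + mu)"
  shows "(1 - q) * (load phi q n2 n1 u + mu) \<le> load phi q u n2 (n2 - 1) + mu"
proof -
  have "(1 - q) * (load phi q n2 n1 u + mu) \<le> load phi q n2 n1 u + mu"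
    using assms load_nonneg[of phi q u n1 n2] by (simp add: mult_left_le_one_le)
  also have "\<dots> \<le> real u * phi + (1 - q) * phi + mu"
  proof (cases "u = n1")
    case True
    have "real n2 * phi \<le> real n1 * phi" using assms by (simp add: mult_right_mono)
    moreover have "0 \<le> (1 - q) * phi" using assms by simp
    ultimately show ?thesis using True by (simp add: load_def)
  next
    case False
    then have "load phi q n2 n1 u + mu \<le> (1 - q) * (real u * phi + mu) + (1 - q) * phi"
      using ip1 assms by (simp add: load_def algebra_simps)
    also have "\<dots> \<le> real u * phi + mu + (1 - q) * phi"
      using assms by (simp add: mult_left_le_one_le)
    finally show ?thesis by simp
  qed
  also have "\<dots> = load phi q u n2 (n2 - 1) + mu"
    using assms by (simp add: load_def of_nat_diff algebra_simps)
  finally show ?thesis .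
qed

lemma dp1_condition_at_one:
  fixes phi mu q :: real
  assumes "phi \<ge> 0" "mu \<ge> 0" "0 \<le> q" "q \<le> 1" "1 \<le> n1"
  shows "(1 - q) * (load phi q 1 n2 n2 + mu) \<le> load phi q n2 n1 0 + mu"
proof -
  have "(1 - q) * phi \<le> real n1 * (1 - q) * phi"
    using assms mult_right_mono[of 1 "real n1" "(1 - q) * phi"] by simp
  moreover have "(1 - q) * mu \<le> mu" "0 \<le> real n2 * phi"
    using assms by (simp_all add: mult_left_le_one_le)
  ultimately show ?thesis by (simp add: load_def distrib_left)
qed

theorem theorem5:
  fixes phi mu q :: real and n1 n2 :: nat
  assumes "n1 \<ge> n2" and "n1 \<ge> 1"
    and "phi > 0" and "mu > 0" and "0 \<le> q" and "q \<le> 1"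
  shows "\<exists>s1 s2. is_NE phi mu q n1 n2 s1 s2 \<and> dp_count n1 s1 > 0 \<and> dp_count n2 s2 = n2"
proof -
  define dp1 where "dp1 u \<longleftrightarrow> 1 \<le> u \<and> u \<le> n1
    \<and> (1 - q) * (load phi q u n2 n2 + mu) \<le> load phi q n2 n1 (u - 1) + mu" for u
  have "dp1 1"
    using dp1_condition_at_one[of phi mu q n1 n2] assms by (simp add: dp1_def)
  then obtain u1 where u1: "dp1 u1" and maximal: "\<And>u. dp1 u \<Longrightarrow> u \<le> u1"
    using Nat.ex_has_greatest_nat[of dp1 1 n1] dp1_def by blast
  have ip1: "load phi q n2 n1 u1 + mu \<le> (1 - q) * (load phi q (u1 + 1) n2 n2 + mu)"
    if "u1 < n1"
    using maximal[of "u1 + 1"] that by (force simp: dp1_def)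
  define s1 where "s1 = (\<lambda>k :: nat. k < u1)"
  have count: "dp_count n1 s1 = u1"
    using u1 by (simp add: s1_def dp1_def dp_count_prefix)
  have "is_NE phi mu q n1 n2 s1 (\<lambda>_. True)"
    unfolding is_NE_def
    using no_profitable_switch1[of phi mu q _ n1 s1 n2 "\<lambda>_. True"]
      no_profitable_switch2_all_dp[of phi mu q _ n2 n1 s1]
      dp2_condition_from_ip1_condition[of phi mu q n2 n1 u1] u1 ip1 assms
    by (simp add: count dp_count_all dp1_def)
  moreover have "dp_count n1 s1 > 0" "dp_count n2 (\<lambda>_. True) = n2"
    using u1 count by (simp_all add: dp1_def dp_count_all)
  ultimately show ?thesis by blast
qed

end
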